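(* Let $(a_m)_{m\ge1}$ be positive reals with $\sum_m a_m<\infty$, put $M=\sup_m a_m$, and let $(t_m)_{m\ge1}$ be complex numbers with $\sup_m|t_m|\le T<\infty$. Then each $\theta_{\infty;k}(\vec t)$ is an absolutely convergent series, and for all complex $z$ with $|z|M(1+T)<1$ the series $\sum_{k\ge0}\theta_{\infty;k}(\vec t)z^k$ converges absolutely and \[ \sum_{k\ge0}\theta_{\infty;k}(\vec t)z^k=\prod_{m=1}^{\infty}\Big(1+\frac{a_mz}{1-a_mzt_m}\Big)=\exp\Big(\sum_{j=1}^\infty\frac{z^j}{j}\sum_{m=1}^\infty a_m^j\big(t_m^j-(t_m-1)^j\big)\Big). \] In particular, with $t_m=t$ for all $m$ and $A_\infty(j)=\sum_{m\ge1}a_m^j$, $\sum_k\theta_{\infty;k}(t)z^k=\prod_{m\ge1}\big(1+\frac{a_mz}{1-a_mzt}\big)=\exp\big(\sum_{j\ge1}\frac{z^j}{j}A_\infty(j)(t^j-(t-1)^j)\big)$.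
   Context: For $k\ge0$ let $\mathcal M_{\infty,k}=\{(\ell_1,\dots,\ell_k)\in\mathbb N^k:\ell_1\ge\cdots\ge\ell_k\ge1\}$, $w(\vec\ell)=\prod_j a_{\ell_j}$, $\sigma(\vec\ell)=|\{1\le j\le k-1:\ell_j=\ell_{j+1}\}|$, and $\sigma^{(i)}(\vec\ell)=|\{1\le j\le k-1:\ell_j=\ell_{j+1}=i\}|$. Define $\theta_{\infty;k}(\vec t)=\sum_{\vec\ell\in\mathcal M_{\infty,k}}w(\vec\ell)\prod_{i\ge1}t_i^{\sigma^{(i)}(\vec\ell)}$ and $\theta_{\infty;k}(t)=\sum_{\vec\ell\in\mathcal M_{\infty,k}}w(\vec\ell)t^{\sigma(\vec\ell)}$, with value $1$ for $k=0$. *)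

theory Defs
  imports "HOL-Analysis.Analysis"
begin

text \<open>Non-increasing tuples (l_1 >= ... >= l_k >= 1), represented as lists (0-based positions).\<close>
definition Mset :: "nat \<Rightarrow> nat list set" where
  "Mset k = {l. length l = k \<and> sorted_wrt (\<ge>) l \<and> (\<forall>x\<in>set l. 1 \<le> x)}"

definition wt :: "(nat \<Rightarrow> real) \<Rightarrow> nat list \<Rightarrow> real" where
  "wt a l = prod_list (map a l)"

definition sig :: "nat list \<Rightarrow> nat" where
  "sig l = card {j. j + 1 < length l \<and> l ! j = l ! (j + 1)}"

definition sig_i :: "nat \<Rightarrow> nat list \<Rightarrow> nat" where
  "sig_i i l = card {j. j + 1 < length l \<and> l ! j = i \<and> l ! (j + 1) = i}"

text \<open>Summand of theta_{infty;k}(vec t): the product over i >= 1 of t_i^{sigma^(i)} has only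
  finitely many factors different from 1 (those with i in set l), so it is a finite product.\<close>
definition theta_vec_term :: "(nat \<Rightarrow> real) \<Rightarrow> (nat \<Rightarrow> complex) \<Rightarrow> nat list \<Rightarrow> complex" where
  "theta_vec_term a t l = complex_of_real (wt a l) * (\<Prod>i\<in>set l. t i ^ sig_i i l)"

definition theta_vec :: "(nat \<Rightarrow> real) \<Rightarrow> (nat \<Rightarrow> complex) \<Rightarrow> nat \<Rightarrow> complex" where
  "theta_vec a t k = infsum (theta_vec_term a t) (Mset k)"

definition theta_sc_term :: "(nat \<Rightarrow> real) \<Rightarrow> complex \<Rightarrow> nat list \<Rightarrow> complex" where
  "theta_sc_term a t l = complex_of_real (wt a l) * t ^ sig l"

definition theta_sc :: "(nat \<Rightarrow> real) \<Rightarrow> complex \<Rightarrow> nat \<Rightarrow> complex" where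
  "theta_sc a t k = infsum (theta_sc_term a t) (Mset k)"

end

theory Submission
  imports Defs "HOL-Library.Multiset"
begin

text \<open>Encode a non-increasing list by the multiplicities r_i of its parts. Since
  sigma^(i) = r_i - 1, the summand of theta_{infinity;k}(t) z^k is the product over i of
  a_i^r_i z^r_i t_i^(r_i - 1), so the sum over all lists with parts at most N is a finite product
  of geometric series, prod_{i <= N} (1 + a_i z / (1 - a_i z t_i)). The same identity for |z| and
  |t_i| bounds the sums of absolute values, so these truncations exhaust an absolutely convergent
  sum over all partitions, which may then be regrouped by length.
  Each factor is (1 - a_i z (t_i - 1)) / (1 - a_i z t_i), the exponential of
  sum_j z^j a_i^j (t_i^j - (t_i - 1)^j) / j. For |z| M (1 + T) < 1 the double series over (j, i)
  converges absolutely, so it may be summed over i first, which gives the exponential form.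
  The scalar case is t_i = t, because sigma is the sum of the sigma^(i).\<close>

lemma has_sum_prod_PiE:
  fixes f :: "'a \<Rightarrow> 'b \<Rightarrow> 'c::{real_normed_field, banach, second_countable_topology}"
  assumes "finite A" "\<And>x. x \<in> A \<Longrightarrow> countable (B x)"
    and "\<And>x. x \<in> A \<Longrightarrow> (f x has_sum s x) (B x)"
    and "\<And>x. x \<in> A \<Longrightarrow> (\<lambda>y. norm (f x y)) summable_on B x"
  shows "((\<lambda>g. \<Prod>x\<in>A. f x (g x)) has_sum (\<Prod>x\<in>A. s x)) (PiE A B)"
proof -
  have "(\<lambda>g. norm (\<Prod>x\<in>A. f x (g x))) summable_on PiE A B"
    using abs_summable_on_prod_PiE[of A B f] assms(1,2,4) by (simp add: abs_summable_equivalent)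
  then have "(\<lambda>g. \<Prod>x\<in>A. f x (g x)) summable_on PiE A B"
    by (rule abs_summable_summable)
  moreover have "infsum (\<lambda>g. \<Prod>x\<in>A. f x (g x)) (PiE A B) = (\<Prod>x\<in>A. infsum (f x) (B x))"
    by (rule infsum_prod_PiE_abs) (use assms(1,4) in auto)
  moreover have "(\<Prod>x\<in>A. infsum (f x) (B x)) = (\<Prod>x\<in>A. s x)"
    using assms(3) by (intro prod.cong refl infsumI)
  ultimately show ?thesis
    by (metis has_sum_infsum)
qed

lemma has_sum_one_plus_geometric:
  fixes c w :: "'a::{real_normed_field, banach}"
  assumes "norm w < 1"
  shows "((\<lambda>r. if r = 0 then 1 else c * w ^ (r - 1)) has_sum (1 + c / (1 - w))) UNIV"
proof -
  let ?g = "\<lambda>r. if r = 0 then 1 else c * w ^ (r - 1)"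
  have "(\<lambda>r. c * w ^ r) sums (c * (1 / (1 - w)))"
    by (rule sums_mult) (use geometric_sums[OF assms] in \<open>simp add: divide_inverse\<close>)
  then have "?g sums (c / (1 - w) + ?g 0)"
    by (intro sums_Suc_iff[THEN iffD1]) simp
  then have "?g sums (1 + c / (1 - w))"
    by (simp add: add.commute)
  moreover have "(\<lambda>r. norm c * norm w ^ r) sums (norm c * (1 / (1 - norm w)))"
    by (rule sums_mult) (use geometric_sums[of "norm w"] assms in \<open>simp add: divide_inverse\<close>)
  then have "(\<lambda>r. norm (?g r)) sums (norm c / (1 - norm w) + norm (?g 0))"
    by (intro sums_Suc_iff[THEN iffD1]) (simp add: norm_mult norm_power)
  then have "summable (\<lambda>r. norm (?g r))"
    by (rule sums_summable)
  ultimately show ?thesis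
    by (rule norm_summable_imp_has_sum[rotated])
qed

lemma summable_on_nat_suminf:
  fixes f :: "nat \<Rightarrow> 'a::banach"
  assumes "f summable_on UNIV"
  shows "summable f" and "infsum f UNIV = suminf f"
proof -
  have "f sums infsum f UNIV"
    using assms by (intro has_sum_imp_sums has_sum_infsum)
  then show "summable f" "infsum f UNIV = suminf f"
    by (auto simp: sums_iff)
qed

lemma suminf_swap_abs_summable:
  fixes h :: "nat \<Rightarrow> nat \<Rightarrow> 'a::{banach, uniform_topological_group_add}"
  assumes "(\<lambda>(j, m). norm (h j m)) summable_on UNIV"
  shows "summable (\<lambda>j. \<Sum>m. h j m)" and "summable (\<lambda>m. \<Sum>j. h j m)"
    and "(\<Sum>j. \<Sum>m. h j m) = (\<Sum>m. \<Sum>j. h j m)"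
proof -
  have hs: "(\<lambda>(j, m). h j m) summable_on UNIV \<times> UNIV"
    using abs_summable_summable[of "\<lambda>(j, m). h j m"] assms by (simp add: case_prod_unfold)
  have hs': "(\<lambda>(m, j). h j m) summable_on UNIV \<times> UNIV"
    using summable_on_swap[of "\<lambda>(j, m). h j m" UNIV UNIV] hs by (simp add: case_prod_unfold)
  have row: "h j summable_on UNIV" for j
    using summable_on_SigmaD1[of h UNIV "\<lambda>_. UNIV"] hs by simp
  have col: "(\<lambda>j. h j m) summable_on UNIV" for m
    using summable_on_SigmaD1[of "\<lambda>m j. h j m" UNIV "\<lambda>_. UNIV"] hs' by simp
  have rows: "(\<lambda>j. \<Sum>m. h j m) summable_on UNIV"
    using summable_on_SigmaD[OF hs] row by (simp add: summable_on_nat_suminf(2))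
  have cols: "(\<lambda>m. \<Sum>j. h j m) summable_on UNIV"
    using summable_on_SigmaD[OF hs'] col by (simp add: summable_on_nat_suminf(2))
  show "summable (\<lambda>j. \<Sum>m. h j m)" "summable (\<lambda>m. \<Sum>j. h j m)"
    using rows cols by (simp_all add: summable_on_nat_suminf(1))
  have "infsum (\<lambda>j. infsum (h j) UNIV) UNIV = infsum (\<lambda>m. infsum (\<lambda>j. h j m) UNIV) UNIV"
    by (rule infsum_swap_banach) (use hs in simp)
  then show "(\<Sum>j. \<Sum>m. h j m) = (\<Sum>m. \<Sum>j. h j m)"
    using rows cols row col by (simp add: summable_on_nat_suminf(2))
qed

lemma has_sum_exhaustion:
  fixes f :: "'a \<Rightarrow> 'b::banach"
  assumes B_sub: "\<And>N. B N \<subseteq> A" and B_mono: "mono B"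
    and exhaust: "\<And>F. finite F \<Longrightarrow> F \<subseteq> A \<Longrightarrow> \<exists>N. F \<subseteq> B N"
    and P: "\<And>N. (f has_sum P N) (B N)"
    and Q: "\<And>N. ((\<lambda>x. norm (f x)) has_sum Q N) (B N)"
    and Q_conv: "Q \<longlonglongrightarrow> L"
  shows "(\<lambda>x. norm (f x)) summable_on A" and "P \<longlonglongrightarrow> infsum f A"
proof -
  have "incseq Q"
  proof (rule monoI)
    fix N N' :: nat assume "N \<le> N'"
    with B_mono have "B N \<subseteq> B N'" by (rule monoD)
    then show "Q N \<le> Q N'" using has_sum_mono2[OF Q[of N] Q[of N']] by simp
  qed
  then have Q_le: "Q N \<le> L" for N
    using Q_conv by (rule incseq_le)
  have finite_le: "(\<Sum>x\<in>F. norm (f x)) \<le> L" if F: "finite F" "F \<subseteq> A" for F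
  proof -
    obtain N where "F \<subseteq> B N" using exhaust[OF F] ..
    then have "(\<Sum>x\<in>F. norm (f x)) \<le> Q N"
      by (intro finite_sum_le_has_sum[OF Q \<open>finite F\<close>]) auto
    with Q_le[of N] show ?thesis by linarith
  qed
  show norm_summable: "(\<lambda>x. norm (f x)) summable_on A"
    by (rule nonneg_bdd_above_summable_on) (use finite_le in \<open>auto simp: bdd_above_def\<close>)
  have norm_le: "infsum (\<lambda>x. norm (f x)) A \<le> L"
    by (rule infsum_le_finite_sums[OF norm_summable finite_le])
  have tail: "norm (infsum f A - P N) \<le> L - Q N" for N
  proof -
    have "(f has_sum (infsum f A - P N)) (A - B N)"
      by (rule has_sum_Diff[OF has_sum_infsum P B_sub])
        (rule abs_summable_summable[OF norm_summable])
    moreover have "((\<lambda>x. norm (f x)) has_sum (infsum (\<lambda>x. norm (f x)) A - Q N)) (A - B N)"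
      by (rule has_sum_Diff[OF has_sum_infsum[OF norm_summable] Q B_sub])
    ultimately have "norm (infsum f A - P N) \<le> infsum (\<lambda>x. norm (f x)) A - Q N"
      by (rule norm_has_sum_bound[rotated])
    with norm_le show ?thesis by linarith
  qed
  have "(\<lambda>N. P N - infsum f A) \<longlonglongrightarrow> 0"
  proof (rule Lim_null_comparison)
    show "\<forall>\<^sub>F N in sequentially. norm (P N - infsum f A) \<le> L - Q N"
      using tail by (simp add: norm_minus_commute)
    show "(\<lambda>N. L - Q N) \<longlonglongrightarrow> 0"
      using tendsto_diff[OF tendsto_const Q_conv, of L] by simp
  qed
  then show "P \<longlonglongrightarrow> infsum f A" by (simp add: LIM_zero_iff)
qed

lemma has_prod_of_tendsto_exp:
  fixes f :: "nat \<Rightarrow> 'a::{real_normed_field, banach}"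
  assumes "(\<lambda>N. \<Prod>i\<in>{1..N}. f i) \<longlonglongrightarrow> exp L"
  shows "(\<lambda>m. f (Suc m)) has_prod exp L"
proof -
  have "(\<lambda>n. \<Prod>i\<le>n. f (Suc i)) = (\<lambda>n. \<Prod>i\<in>{1..Suc n}. f i)"
    unfolding One_nat_def prod.atLeast1_atMost_eq lessThan_Suc_atMost ..
  then have "(\<lambda>n. \<Prod>i\<le>n. f (Suc i)) \<longlonglongrightarrow> exp L"
    using LIMSEQ_Suc[OF assms] by simp
  then show ?thesis
    by (simp add: has_prod_def raw_has_prod_def)
qed

lemma minus_ln_one_minus_sums:
  fixes x :: complex
  assumes "norm x < 1"
  shows "(\<lambda>j. x ^ Suc j / of_nat (Suc j)) sums (- ln (1 - x))"
proof -
  have "(\<lambda>n. - ((- (- x)) ^ n) / of_nat n) sums ln (1 + - x)"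
    by (rule Ln_series') (use assms in simp)
  then have "(\<lambda>n. x ^ n / of_nat n) sums (- ln (1 - x))"
    using sums_minus by fastforce
  then show ?thesis
    using sums_Suc_iff[of "\<lambda>n. x ^ n / of_nat n"] by simp
qed

lemma norm_power_diff_le:
  fixes t :: "'a::real_normed_algebra_1"
  shows "norm (t ^ n - (t - 1) ^ n) \<le> 2 * (1 + norm t) ^ n"
proof -
  have "norm (t ^ n) \<le> (1 + norm t) ^ n"
    by (rule order_trans[OF norm_power_ineq power_mono]) auto
  moreover have "norm ((t - 1) ^ n) \<le> (1 + norm t) ^ n"
    using norm_triangle_ineq4[of t 1]
    by (intro order_trans[OF norm_power_ineq power_mono]) (auto simp: add.commute)
  ultimately show ?thesis
    using norm_triangle_ineq4[of "t ^ n" "(t - 1) ^ n"] by linarith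
qed

section \<open>Repeated parts of a non-increasing list\<close>

lemma sig_i_Cons:
  "sig_i i (x # l) = (if l \<noteq> [] \<and> x = i \<and> hd l = i then 1 else 0) + sig_i i l"
proof -
  let ?S = "\<lambda>l. {j. j + 1 < length l \<and> l ! j = i \<and> l ! (j + 1) = i}"
  have split: "?S (x # l) = (if l \<noteq> [] \<and> x = i \<and> hd l = i then {0} else {}) \<union> Suc ` ?S l"
  proof (intro set_eqI iffI)
    fix j assume "j \<in> ?S (x # l)"
    then show "j \<in> (if l \<noteq> [] \<and> x = i \<and> hd l = i then {0} else {}) \<union> Suc ` ?S l"
      by (cases j) (auto simp: hd_conv_nth)
  next
    fix j assume "j \<in> (if l \<noteq> [] \<and> x = i \<and> hd l = i then {0} else {}) \<union> Suc ` ?S l"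
    then show "j \<in> ?S (x # l)"
      by (cases "l = []") (auto simp: hd_conv_nth split: if_splits)
  qed
  have "finite (Suc ` ?S l)"
    by (rule finite_imageI, rule finite_subset[of _ "{..<length l}"]) auto
  then have "card (?S (x # l)) = (if l \<noteq> [] \<and> x = i \<and> hd l = i then 1 else 0) + card (?S l)"
    unfolding split by (subst card_Un_disjoint) (auto simp: card_image)
  then show ?thesis unfolding sig_i_def .
qed

lemma sig_i_nonincreasing:
  assumes "sorted_wrt (\<ge>) l"
  shows "sig_i i l = count_list l i - 1"
  using assms
proof (induction l)
  case Nil
  then show ?case by (simp add: sig_i_def)
next
  case (Cons x l)
  then have IH: "sig_i i l = count_list l i - 1"
    by simp
  consider "l \<noteq> []" "x = i" "hd l = i" | "x = i" "i \<notin> set l" | "x \<noteq> i"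
    using Cons.prems by (cases l) fastforce+
  then show ?case
  proof cases
    case 1
    then have "count_list l i \<ge> 1" by (cases l) auto
    with 1 IH show ?thesis by (simp add: sig_i_Cons)
  next
    case 2
    then show ?thesis using IH by (auto simp: sig_i_Cons count_list_0_iff)
  next
    case 3
    then show ?thesis using IH by (simp add: sig_i_Cons)
  qed
qed

lemma sig_eq_sum_sig_i: "sig l = (\<Sum>i\<in>set l. sig_i i l)"
proof -
  have "{j. j + 1 < length l \<and> l ! j = l ! (j + 1)} =
      (\<Union>i\<in>set l. {j. j + 1 < length l \<and> l ! j = i \<and> l ! (j + 1) = i})"
    by auto
  moreover have "card (\<Union>i\<in>set l. {j. j + 1 < length l \<and> l ! j = i \<and> l ! (j + 1) = i}) =
      (\<Sum>i\<in>set l. card {j. j + 1 < length l \<and> l ! j = i \<and> l ! (j + 1) = i})"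
    by (rule card_UN_disjoint) (auto intro: finite_subset[of _ "{..<length l}"])
  ultimately show ?thesis unfolding sig_def sig_i_def by simp
qed

lemma theta_sc_term_eq_theta_vec_term: "theta_sc_term a s = theta_vec_term a (\<lambda>_. s)"
  by (rule ext) (simp add: theta_sc_term_def theta_vec_term_def sig_eq_sum_sig_i power_sum)

lemma theta_sc_eq_theta_vec: "theta_sc a s = theta_vec a (\<lambda>_. s)"
  by (rule ext) (simp add: theta_sc_def theta_vec_def theta_sc_term_eq_theta_vec_term)

lemma prod_list_map_eq_prod_count:
  fixes f :: "'a \<Rightarrow> 'b::comm_monoid_mult"
  assumes "finite X" "set l \<subseteq> X"
  shows "prod_list (map f l) = (\<Prod>i\<in>X. f i ^ count_list l i)"
  using assms(2)
proof (induction l)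
  case Nil
  then show ?case by simp
next
  case (Cons x l)
  then have x: "x \<in> X" by simp
  have "(\<Prod>i\<in>X. f i ^ count_list (x # l) i) = (\<Prod>i\<in>X. (if i = x then f i else 1) * f i ^ count_list l i)"
    by (rule prod.cong) auto
  also have "\<dots> = f x * (\<Prod>i\<in>X. f i ^ count_list l i)"
    using assms(1) x by (simp add: prod.distrib prod.delta)
  finally show ?case using Cons by simp
qed

definition theta_monomial :: "(nat \<Rightarrow> real) \<Rightarrow> (nat \<Rightarrow> complex) \<Rightarrow> complex \<Rightarrow> nat list \<Rightarrow> complex" where
  "theta_monomial a t z l = theta_vec_term a t l * z ^ length l"

text \<open>The truncated subtraction \<open>r - 1\<close> makes this \<open>1\<close> for \<open>r = 0\<close>.\<close>
definition part_weight :: "(nat \<Rightarrow> real) \<Rightarrow> (nat \<Rightarrow> complex) \<Rightarrow> complex \<Rightarrow> nat \<Rightarrow> nat \<Rightarrow> complex" where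
  "part_weight a t z i r = of_real (a i ^ r) * z ^ r * t i ^ (r - 1)"

lemma theta_monomial_eq_prod_part_weight:
  assumes "sorted_wrt (\<ge>) l" "finite X" "set l \<subseteq> X"
  shows "theta_monomial a t z l = (\<Prod>i\<in>X. part_weight a t z i (count_list l i))"
proof -
  have wt: "wt a l = (\<Prod>i\<in>X. a i ^ count_list l i)"
    unfolding wt_def by (rule prod_list_map_eq_prod_count[OF assms(2,3)])
  have "z ^ length l = prod_list (map (\<lambda>_. z) l)"
    by (induction l) auto
  also have "\<dots> = (\<Prod>i\<in>X. z ^ count_list l i)"
    by (rule prod_list_map_eq_prod_count[OF assms(2,3)])
  finally have z: "z ^ length l = (\<Prod>i\<in>X. z ^ count_list l i)" .
  have "(\<Prod>i\<in>set l. t i ^ sig_i i l) = (\<Prod>i\<in>set l. t i ^ (count_list l i - 1))"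
    by (simp add: sig_i_nonincreasing[OF assms(1)])
  also have "\<dots> = (\<Prod>i\<in>X. t i ^ (count_list l i - 1))"
    by (rule prod.mono_neutral_left) (use assms in \<open>auto simp: count_list_0_iff\<close>)
  finally have t: "(\<Prod>i\<in>set l. t i ^ sig_i i l) = (\<Prod>i\<in>X. t i ^ (count_list l i - 1))" .
  show ?thesis
    unfolding theta_monomial_def theta_vec_term_def wt z t part_weight_def of_real_prod
    by (simp add: prod.distrib mult_ac)
qed

section \<open>Partitions as multiplicity functions\<close>

definition partition_lists :: "nat list set" where
  "partition_lists = {l. sorted_wrt (\<ge>) l \<and> (\<forall>x\<in>set l. 1 \<le> x)}"

definition partition_lists_le :: "nat \<Rightarrow> nat list set" where
  "partition_lists_le N = {l \<in> partition_lists. set l \<subseteq> {1..N}}"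

lemma Mset_eq_partition_lists: "Mset k = {l \<in> partition_lists. length l = k}"
  by (auto simp: Mset_def partition_lists_def)

fun partition_of_mult :: "(nat \<Rightarrow> nat) \<Rightarrow> nat \<Rightarrow> nat list" where
  "partition_of_mult f 0 = []"
| "partition_of_mult f (Suc n) = replicate (f (Suc n)) (Suc n) @ partition_of_mult f n"

lemma set_partition_of_mult: "set (partition_of_mult f n) \<subseteq> {1..n}"
  by (induction n) auto

lemma count_partition_of_mult:
  "count_list (partition_of_mult f n) i = (if i \<in> {1..n} then f i else 0)"
proof -
  have "count_list (replicate k x) i = (if i = x then k else 0)" for k x :: nat
    by (induction k) auto
  then show ?thesis by (induction n) auto
qed

lemma sorted_partition_of_mult: "sorted_wrt (\<ge>) (partition_of_mult f n)"
proof (induction n)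
  case 0
  then show ?case by simp
next
  case (Suc n)
  have "sorted_wrt (\<ge>) (replicate k (Suc n))" for k
    by (induction k) auto
  with Suc set_partition_of_mult[of f n] show ?case
    by (auto simp: sorted_wrt_append)
qed

lemma nonincreasing_list_eqI:
  fixes l1 l2 :: "'a::linorder list"
  assumes "sorted_wrt (\<ge>) l1" "sorted_wrt (\<ge>) l2" "\<And>i. count_list l1 i = count_list l2 i"
  shows "l1 = l2"
proof -
  have "mset (rev l1) = mset (rev l2)"
    by (rule multiset_eqI) (simp add: count_mset assms(3))
  moreover have "sorted (rev l1)" "sorted (rev l2)"
    using assms(1,2) by (simp_all add: sorted_wrt_rev)
  ultimately have "rev l1 = rev l2"
    by (metis properties_for_sort sorted_sort_id)
  then show ?thesis by simp
qed

lemma bij_betw_partition_of_mult: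
  "bij_betw (\<lambda>f. partition_of_mult f N) (PiE {1..N} (\<lambda>_. UNIV)) (partition_lists_le N)"
proof (rule bij_betwI')
  fix f g :: "nat \<Rightarrow> nat"
  assume f: "f \<in> PiE {1..N} (\<lambda>_. UNIV)" and g: "g \<in> PiE {1..N} (\<lambda>_. UNIV)"
  show "(partition_of_mult f N = partition_of_mult g N) = (f = g)"
  proof
    assume "partition_of_mult f N = partition_of_mult g N"
    then have "f i = g i" if "i \<in> {1..N}" for i
      using that count_partition_of_mult[of f N] count_partition_of_mult[of g N] by metis
    with f g show "f = g"
      by (intro ext) (metis PiE_arb atLeastAtMost_iff)
  qed simp
next
  fix f :: "nat \<Rightarrow> nat"
  show "partition_of_mult f N \<in> partition_lists_le N"
    using set_partition_of_mult[of f N] sorted_partition_of_mult[of f N]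
    by (auto simp: partition_lists_le_def partition_lists_def)
next
  fix l assume l: "l \<in> partition_lists_le N"
  show "\<exists>f\<in>PiE {1..N} (\<lambda>_. UNIV). l = partition_of_mult f N"
  proof
    show "l = partition_of_mult (restrict (count_list l) {1..N}) N"
      by (rule nonincreasing_list_eqI)
        (use l in \<open>auto simp: partition_lists_le_def partition_lists_def sorted_partition_of_mult
          count_partition_of_mult count_list_0_iff subset_iff\<close>)
  qed simp
qed

lemma partition_lists_le_exhaust:
  assumes "finite F" "F \<subseteq> partition_lists"
  shows "\<exists>N. F \<subseteq> partition_lists_le N"
proof
  define N where "N = Max (insert 0 (\<Union>l\<in>F. set l))"
  have "x \<le> N" if "l \<in> F" "x \<in> set l" for l x
    unfolding N_def using assms that by (intro Max_ge) auto
  with assms(2) show "F \<subseteq> partition_lists_le N"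
    by (auto simp: partition_lists_le_def partition_lists_def)
qed

lemma part_weight_eq_geometric:
  "part_weight a t z i r =
     (if r = 0 then 1 else of_real (a i) * z * (of_real (a i) * z * t i) ^ (r - 1))"
  by (cases r) (simp_all add: part_weight_def power_mult_distrib mult_ac)

lemma part_weight_has_sum:
  assumes "a i \<ge> 0" "a i * norm z * norm (t i) < 1"
  shows "(part_weight a t z i has_sum (1 + of_real (a i) * z / (1 - of_real (a i) * z * t i))) UNIV"
    and "((\<lambda>r. norm (part_weight a t z i r))
          has_sum (1 + a i * norm z / (1 - a i * norm z * norm (t i)))) UNIV"
proof -
  show "(part_weight a t z i has_sum (1 + of_real (a i) * z / (1 - of_real (a i) * z * t i))) UNIV"
    unfolding part_weight_eq_geometric
    by (rule has_sum_one_plus_geometric) (use assms in \<open>simp add: norm_mult\<close>)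
  have "norm (part_weight a t z i r) =
      (if r = 0 then 1 else a i * norm z * (a i * norm z * norm (t i)) ^ (r - 1))" for r
    using assms(1) by (simp add: part_weight_eq_geometric norm_mult norm_power)
  then show "((\<lambda>r. norm (part_weight a t z i r))
      has_sum (1 + a i * norm z / (1 - a i * norm z * norm (t i)))) UNIV"
    by (simp only:) (rule has_sum_one_plus_geometric, use assms in simp)
qed

lemma theta_monomial_has_sum_partition_lists_le:
  assumes "\<And>i. i \<in> {1..N} \<Longrightarrow> a i \<ge> 0"
    and "\<And>i. i \<in> {1..N} \<Longrightarrow> a i * norm z * norm (t i) < 1"
  shows "(theta_monomial a t z has_sum
            (\<Prod>i\<in>{1..N}. 1 + of_real (a i) * z / (1 - of_real (a i) * z * t i))) (partition_lists_le N)"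
    and "((\<lambda>l. norm (theta_monomial a t z l)) has_sum
            (\<Prod>i\<in>{1..N}. 1 + a i * norm z / (1 - a i * norm z * norm (t i)))) (partition_lists_le N)"
proof -
  have monomial: "theta_monomial a t z (partition_of_mult f N) =
      (\<Prod>i\<in>{1..N}. part_weight a t z i (f i))" for f
  proof -
    have "theta_monomial a t z (partition_of_mult f N) =
        (\<Prod>i\<in>{1..N}. part_weight a t z i (count_list (partition_of_mult f N) i))"
      by (rule theta_monomial_eq_prod_part_weight[OF sorted_partition_of_mult _ set_partition_of_mult])
        simp
    also have "\<dots> = (\<Prod>i\<in>{1..N}. part_weight a t z i (f i))"
      by (intro prod.cong) (auto simp: count_partition_of_mult)
    finally show ?thesis .
  qed
  have weights:
    "(part_weight a t z i has_sum (1 + of_real (a i) * z / (1 - of_real (a i) * z * t i))) UNIV"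
    "((\<lambda>r. norm (part_weight a t z i r))
        has_sum (1 + a i * norm z / (1 - a i * norm z * norm (t i)))) UNIV"
    if "i \<in> {1..N}" for i
    using part_weight_has_sum[of a i z t] assms[OF that] by simp_all
  have "((\<lambda>f. theta_monomial a t z (partition_of_mult f N)) has_sum
      (\<Prod>i\<in>{1..N}. 1 + of_real (a i) * z / (1 - of_real (a i) * z * t i))) (PiE {1..N} (\<lambda>_. UNIV))"
    unfolding monomial using weights by (intro has_sum_prod_PiE) (auto simp: summable_on_def)
  then show "(theta_monomial a t z has_sum
      (\<Prod>i\<in>{1..N}. 1 + of_real (a i) * z / (1 - of_real (a i) * z * t i))) (partition_lists_le N)"
    by (subst (asm) has_sum_reindex_bij_betw[OF bij_betw_partition_of_mult])
  have "((\<lambda>f. norm (theta_monomial a t z (partition_of_mult f N))) has_sum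
      (\<Prod>i\<in>{1..N}. 1 + a i * norm z / (1 - a i * norm z * norm (t i)))) (PiE {1..N} (\<lambda>_. UNIV))"
    unfolding monomial prod_norm[symmetric] using weights
    by (intro has_sum_prod_PiE) (auto simp: summable_on_def)
  then show "((\<lambda>l. norm (theta_monomial a t z l)) has_sum
      (\<Prod>i\<in>{1..N}. 1 + a i * norm z / (1 - a i * norm z * norm (t i)))) (partition_lists_le N)"
    by (subst (asm) has_sum_reindex_bij_betw[OF bij_betw_partition_of_mult])
qed

section \<open>The exponential formula for the product\<close>

lemma exp_log_series_eq_factor:
  fixes a :: real and z t :: complex
  assumes a: "a \<ge> 0" and small: "a * norm z * (1 + norm t) < 1"
  shows "exp (\<Sum>j. z ^ Suc j / of_nat (Suc j) * (of_real a ^ Suc j * (t ^ Suc j - (t - 1) ^ Suc j)))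
    = 1 + of_real a * z / (1 - of_real a * z * t)"
proof -
  define L where "L = ln (1 - of_real a * z * (t - 1)) - ln (1 - of_real a * z * t)"
  define x where "x = of_real a * z * (t - 1)"
  define y where "y = of_real a * z * t"
  have "norm x \<le> a * norm z * (1 + norm t)"
    unfolding x_def using a norm_triangle_ineq4[of t 1]
    by (simp add: norm_mult mult_left_mono)
  with small have x: "norm x < 1" by linarith
  have "norm y \<le> a * norm z * (1 + norm t)"
    unfolding y_def using a by (simp add: norm_mult mult_left_mono)
  with small have y: "norm y < 1" by linarith
  have y_pow: "y ^ n = z ^ n * (of_real a ^ n * t ^ n)"
    and x_pow: "x ^ n = z ^ n * (of_real a ^ n * (t - 1) ^ n)" for n
    unfolding x_def y_def by (simp_all add: power_mult_distrib)
  have "z ^ Suc j / of_nat (Suc j) * (of_real a ^ Suc j * (t ^ Suc j - (t - 1) ^ Suc j))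
      = y ^ Suc j / of_nat (Suc j) - x ^ Suc j / of_nat (Suc j)" for j
    unfolding y_pow x_pow by (simp add: diff_divide_distrib right_diff_distrib)
  moreover have "(\<lambda>j. y ^ Suc j / of_nat (Suc j) - x ^ Suc j / of_nat (Suc j)) sums L"
    using sums_diff[OF minus_ln_one_minus_sums[OF y] minus_ln_one_minus_sums[OF x]]
    by (simp add: L_def x_def y_def)
  ultimately have "(\<Sum>j. z ^ Suc j / of_nat (Suc j) * (of_real a ^ Suc j * (t ^ Suc j - (t - 1) ^ Suc j)))
      = L"
    by (simp add: sums_iff)
  moreover have "1 - x \<noteq> 0" "1 - y \<noteq> 0"
    using x y by (auto simp: right_minus_eq)
  then have "exp L = 1 + of_real a * z / (1 - of_real a * z * t)"
    by (simp add: L_def exp_diff flip: x_def y_def) (simp add: x_def y_def field_simps)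
  ultimately show ?thesis
    by simp
qed

lemma norm_log_coeff_term_le:
  fixes t :: complex and A M T :: real
  assumes "0 \<le> A" "A \<le> M" "norm t \<le> T"
  shows "norm (of_real A ^ Suc j * (t ^ Suc j - (t - 1) ^ Suc j))
    \<le> 2 * (M * (1 + T)) ^ j * ((1 + T) * A)"
proof -
  have T: "0 \<le> T" using assms(3) norm_ge_zero order_trans by blast
  have "norm (of_real A ^ Suc j * (t ^ Suc j - (t - 1) ^ Suc j))
      \<le> A ^ Suc j * (2 * (1 + norm t) ^ Suc j)"
    using assms(1) norm_power_diff_le[of t "Suc j"]
    by (simp add: norm_mult norm_power mult_left_mono)
  also have "\<dots> \<le> A ^ Suc j * (2 * (1 + T) ^ Suc j)"
    using assms by (intro mult_left_mono power_mono) auto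
  also have "\<dots> = 2 * (A * (1 + T)) ^ j * ((1 + T) * A)"
    by (simp add: power_mult_distrib mult_ac)
  also have "\<dots> \<le> 2 * (M * (1 + T)) ^ j * ((1 + T) * A)"
    using assms T by (intro mult_right_mono mult_left_mono power_mono) auto
  finally show ?thesis .
qed

lemma summable_log_coeff:
  fixes a :: "nat \<Rightarrow> real" and t :: "nat \<Rightarrow> complex" and T M :: real
  assumes a_nonneg: "\<forall>m\<ge>1. a m \<ge> 0" and a_summable: "summable (\<lambda>m. a (Suc m))"
    and t_bound: "\<forall>m\<ge>1. norm (t m) \<le> T" and a_bound: "\<forall>m\<ge>1. a m \<le> M"
  shows "summable (\<lambda>m. of_real (a (Suc m)) ^ Suc j * (t (Suc m) ^ Suc j - (t (Suc m) - 1) ^ Suc j))"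
  using summable_mult[OF summable_mult[OF a_summable, of "1 + T"], of "2 * (M * (1 + T)) ^ j"]
proof (rule summable_comparison_test')
  show "norm (of_real (a (Suc m)) ^ Suc j * (t (Suc m) ^ Suc j - (t (Suc m) - 1) ^ Suc j))
      \<le> 2 * (M * (1 + T)) ^ j * ((1 + T) * a (Suc m))" for m
    using a_nonneg a_bound t_bound by (intro norm_log_coeff_term_le) auto
qed

lemma log_double_series_abs_summable:
  fixes a :: "nat \<Rightarrow> real" and t :: "nat \<Rightarrow> complex" and z :: complex and T M :: real
  assumes a_nonneg: "\<forall>m\<ge>1. a m \<ge> 0" and a_summable: "summable (\<lambda>m. a (Suc m))"
    and t_bound: "\<forall>m\<ge>1. norm (t m) \<le> T" and a_bound: "\<forall>m\<ge>1. a m \<le> M"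
    and small: "norm z * M * (1 + T) < 1"
  shows "(\<lambda>(j, m). norm (z ^ Suc j / of_nat (Suc j) *
    (of_real (a (Suc m)) ^ Suc j * (t (Suc m) ^ Suc j - (t (Suc m) - 1) ^ Suc j)))) summable_on UNIV"
proof -
  define \<rho> where "\<rho> = norm z * M * (1 + T)"
  define C where "C = norm z * (1 + T)"
  define D where "D = (\<Sum>m. a (Suc m))"
  define B where "B p = 2 * \<rho> ^ fst p * (C * a (Suc (snd p)))" for p :: "nat \<times> nat"
  have T: "T \<ge> 0" using t_bound[rule_format, of 1] norm_ge_zero[of "t 1"] by linarith
  have M: "M \<ge> 0" using a_nonneg[rule_format, of 1] a_bound[rule_format, of 1] by linarith
  have \<rho>: "0 \<le> \<rho>" "\<rho> < 1" using small T M by (simp_all add: \<rho>_def)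
  have term_bound: "norm (z ^ Suc j / of_nat (Suc j) *
      (of_real (a (Suc m)) ^ Suc j * (t (Suc m) ^ Suc j - (t (Suc m) - 1) ^ Suc j))) \<le> B (j, m)"
    for j m
  proof -
    have "norm (z ^ Suc j / of_nat (Suc j)) = norm z ^ Suc j / real (Suc j)"
      by (simp add: norm_divide norm_mult norm_power del: of_nat_Suc)
    also have "\<dots> \<le> norm z ^ Suc j"
      by (simp add: divide_le_eq mult_le_cancel_left1 mult_less_0_iff del: of_nat_Suc)
    finally have c_le: "norm (z ^ Suc j / of_nat (Suc j)) \<le> norm z ^ Suc j" .
    have g_le: "norm (of_real (a (Suc m)) ^ Suc j * (t (Suc m) ^ Suc j - (t (Suc m) - 1) ^ Suc j))
        \<le> 2 * (M * (1 + T)) ^ j * ((1 + T) * a (Suc m))"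
      using a_nonneg a_bound t_bound by (intro norm_log_coeff_term_le) auto
    have "norm (z ^ Suc j / of_nat (Suc j) *
        (of_real (a (Suc m)) ^ Suc j * (t (Suc m) ^ Suc j - (t (Suc m) - 1) ^ Suc j)))
        \<le> norm z ^ Suc j * (2 * (M * (1 + T)) ^ j * ((1 + T) * a (Suc m)))"
      unfolding norm_mult[of "z ^ Suc j / of_nat (Suc j)"] by (rule mult_mono[OF c_le g_le]) auto
    also have "\<dots> = B (j, m)"
      by (simp add: B_def \<rho>_def C_def power_mult_distrib mult_ac)
    finally show ?thesis .
  qed
  have "((\<lambda>m. a (Suc m)) has_sum D) UNIV"
    using a_nonneg a_summable
    by (intro norm_summable_imp_has_sum) (simp_all add: D_def summable_sums)
  then have B_row: "((\<lambda>m. B (j, m)) has_sum 2 * \<rho> ^ j * (C * D)) UNIV" for j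
    unfolding B_def by (simp add: has_sum_cmult_right)
  have "summable (\<lambda>j. 2 * \<rho> ^ j * (C * D))"
    using \<rho> by (intro summable_mult2 summable_mult summable_geometric) simp
  moreover have "C * D \<ge> 0"
    unfolding C_def D_def using T a_nonneg a_summable
    by (intro mult_nonneg_nonneg suminf_nonneg) auto
  ultimately have "(\<lambda>j. 2 * \<rho> ^ j * (C * D)) summable_on UNIV"
    using \<rho> by (subst summable_on_UNIV_nonneg_real_iff) auto
  moreover have "B (j, m) \<ge> 0" for j m
    unfolding B_def C_def using \<rho> T a_nonneg by simp
  ultimately have "B summable_on UNIV \<times> UNIV"
    using B_row by (intro summable_on_SigmaI[where g="\<lambda>j. 2 * \<rho> ^ j * (C * D)"])
  then have "B summable_on UNIV"
    by simp
  then show ?thesis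
  proof (rule summable_on_comparison_test)
    fix p :: "nat \<times> nat"
    show "(\<lambda>(j, m). norm (z ^ Suc j / of_nat (Suc j) *
        (of_real (a (Suc m)) ^ Suc j * (t (Suc m) ^ Suc j - (t (Suc m) - 1) ^ Suc j)))) p \<le> B p"
      using term_bound[of "fst p" "snd p"] by (simp add: case_prod_beta)
  qed auto
qed

lemma prod_factor_tendsto_exp:
  fixes a :: "nat \<Rightarrow> real" and t :: "nat \<Rightarrow> complex" and z :: complex and T M :: real
  assumes a_nonneg: "\<forall>m\<ge>1. a m \<ge> 0" and a_summable: "summable (\<lambda>m. a (Suc m))"
    and t_bound: "\<forall>m\<ge>1. norm (t m) \<le> T" and a_bound: "\<forall>m\<ge>1. a m \<le> M"
    and small: "norm z * M * (1 + T) < 1"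
  shows "summable (\<lambda>j. z ^ Suc j / of_nat (Suc j) *
             (\<Sum>m. of_real (a (Suc m)) ^ Suc j * (t (Suc m) ^ Suc j - (t (Suc m) - 1) ^ Suc j)))"
    and "(\<lambda>N. \<Prod>i\<in>{1..N}. 1 + of_real (a i) * z / (1 - of_real (a i) * z * t i)) \<longlonglongrightarrow>
           exp (\<Sum>j. z ^ Suc j / of_nat (Suc j) *
             (\<Sum>m. of_real (a (Suc m)) ^ Suc j * (t (Suc m) ^ Suc j - (t (Suc m) - 1) ^ Suc j)))"
proof -
  define c where "c j = z ^ Suc j / of_nat (Suc j)" for j
  define g where "g j m = of_real (a (Suc m)) ^ Suc j * (t (Suc m) ^ Suc j - (t (Suc m) - 1) ^ Suc j)"
    for j m
  have g_summable: "summable (g j)" for j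
    unfolding g_def by (rule summable_log_coeff[OF a_nonneg a_summable t_bound a_bound])
  have "(\<lambda>(j, m). norm (c j * g j m)) summable_on UNIV"
    unfolding c_def g_def by (rule log_double_series_abs_summable[OF assms])
  note swap = suminf_swap_abs_summable[OF this]
  have factor: "1 + of_real (a (Suc m)) * z / (1 - of_real (a (Suc m)) * z * t (Suc m))
      = exp (\<Sum>j. c j * g j m)" for m
  proof -
    have T: "T \<ge> 0" using t_bound[rule_format, of 1] norm_ge_zero[of "t 1"] by linarith
    have M: "M \<ge> 0" using a_nonneg[rule_format, of 1] a_bound[rule_format, of 1] by linarith
    have "a (Suc m) * norm z * (1 + norm (t (Suc m))) \<le> M * norm z * (1 + T)"
      using a_nonneg a_bound t_bound T M by (intro mult_mono) auto
    then have "a (Suc m) * norm z * (1 + norm (t (Suc m))) < 1"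
      using small by (simp add: mult_ac)
    moreover have "a (Suc m) \<ge> 0"
      using a_nonneg by simp
    ultimately show ?thesis
      unfolding c_def g_def by (intro exp_log_series_eq_factor[symmetric])
  qed
  have "(\<Sum>j. c j * (\<Sum>m. g j m)) = (\<Sum>j. \<Sum>m. c j * g j m)"
    by (simp add: suminf_mult g_summable)
  also have "\<dots> = (\<Sum>m. \<Sum>j. c j * g j m)"
    by (rule swap(3))
  finally have exponent: "(\<Sum>j. c j * (\<Sum>m. g j m)) = (\<Sum>m. \<Sum>j. c j * g j m)" .
  have "(\<lambda>N. \<Prod>i\<in>{1..N}. 1 + of_real (a i) * z / (1 - of_real (a i) * z * t i))
      = (\<lambda>N. exp (\<Sum>m<N. \<Sum>j. c j * g j m))"
    unfolding One_nat_def prod.atLeast1_atMost_eq by (simp add: factor exp_sum)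
  also have "\<dots> \<longlonglongrightarrow> exp (\<Sum>m. \<Sum>j. c j * g j m)"
    by (intro tendsto_exp summable_LIMSEQ swap(2))
  finally have "(\<lambda>N. \<Prod>i\<in>{1..N}. 1 + of_real (a i) * z / (1 - of_real (a i) * z * t i))
      \<longlonglongrightarrow> exp (\<Sum>j. c j * (\<Sum>m. g j m))"
    unfolding exponent .
  then show "(\<lambda>N. \<Prod>i\<in>{1..N}. 1 + of_real (a i) * z / (1 - of_real (a i) * z * t i)) \<longlonglongrightarrow>
      exp (\<Sum>j. z ^ Suc j / of_nat (Suc j) *
        (\<Sum>m. of_real (a (Suc m)) ^ Suc j * (t (Suc m) ^ Suc j - (t (Suc m) - 1) ^ Suc j)))"
    by (simp only: c_def g_def)
  have "summable (\<lambda>j. c j * (\<Sum>m. g j m))"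
    using swap(1) by (simp add: suminf_mult g_summable)
  then show "summable (\<lambda>j. z ^ Suc j / of_nat (Suc j) *
      (\<Sum>m. of_real (a (Suc m)) ^ Suc j * (t (Suc m) ^ Suc j - (t (Suc m) - 1) ^ Suc j)))"
    by (simp only: c_def g_def)
qed

section \<open>The generating function\<close>

lemma theta_monomial_has_sum:
  fixes a :: "nat \<Rightarrow> real" and t :: "nat \<Rightarrow> complex" and z :: complex and T M :: real
  assumes a_nonneg: "\<forall>m\<ge>1. a m \<ge> 0" and a_summable: "summable (\<lambda>m. a (Suc m))"
    and t_bound: "\<forall>m\<ge>1. norm (t m) \<le> T" and a_bound: "\<forall>m\<ge>1. a m \<le> M"
    and small: "norm z * M * (1 + T) < 1"
  defines "E \<equiv> exp (\<Sum>j. z ^ Suc j / of_nat (Suc j) *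
             (\<Sum>m. of_real (a (Suc m)) ^ Suc j * (t (Suc m) ^ Suc j - (t (Suc m) - 1) ^ Suc j)))"
  shows "(\<lambda>l. norm (theta_monomial a t z l)) summable_on partition_lists"
    and "(theta_monomial a t z has_sum E) partition_lists"
proof -
  define Q where "Q N = (\<Prod>i\<in>{1..N}. 1 + a i * norm z / (1 - a i * norm z * norm (t i)))" for N
  have T: "T \<ge> 0" using t_bound[rule_format, of 1] norm_ge_zero[of "t 1"] by linarith
  have M: "M \<ge> 0" using a_nonneg[rule_format, of 1] a_bound[rule_format, of 1] by linarith
  have factor_small: "a i * norm z * norm (t i) < 1" if "i \<in> {1..N}" for i N
  proof -
    have "a i * norm z * norm (t i) \<le> M * norm z * (1 + T)"
      using that a_nonneg a_bound t_bound T M by (intro mult_mono) auto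
    with small show ?thesis by (simp add: mult_ac)
  qed
  note truncated = theta_monomial_has_sum_partition_lists_le[of N a z t for N]
  obtain L where "(\<lambda>N. complex_of_real (Q N)) \<longlonglongrightarrow> L"
    using prod_factor_tendsto_exp(2)[of a "\<lambda>m. of_real (norm (t m))" T M "of_real (norm z)"]
      a_nonneg a_summable t_bound a_bound small
    by (auto simp: Q_def)
  then have Q: "Q \<longlonglongrightarrow> Re L"
    using tendsto_Re by fastforce
  have "mono partition_lists_le"
    by (rule monoI) (auto simp: partition_lists_le_def)
  note exhaustion = has_sum_exhaustion[of partition_lists_le partition_lists, OF _ this
      partition_lists_le_exhaust truncated(1) truncated(2)[unfolded Q_def[symmetric]] Q]
  show "(\<lambda>l. norm (theta_monomial a t z l)) summable_on partition_lists"
    using exhaustion(1) a_nonneg factor_small by (auto simp: partition_lists_le_def)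
  have "(\<lambda>N. \<Prod>i\<in>{1..N}. 1 + of_real (a i) * z / (1 - of_real (a i) * z * t i))
      \<longlonglongrightarrow> infsum (theta_monomial a t z) partition_lists"
    using exhaustion(2) a_nonneg factor_small by (auto simp: partition_lists_le_def)
  moreover have "(\<lambda>N. \<Prod>i\<in>{1..N}. 1 + of_real (a i) * z / (1 - of_real (a i) * z * t i)) \<longlonglongrightarrow> E"
    unfolding E_def using a_nonneg a_summable t_bound a_bound small
    by (rule prod_factor_tendsto_exp(2))
  ultimately have "infsum (theta_monomial a t z) partition_lists = E"
    by (rule LIMSEQ_unique)
  then show "(theta_monomial a t z has_sum E) partition_lists"
    using abs_summable_summable[OF \<open>(\<lambda>l. norm (theta_monomial a t z l)) summable_on partition_lists\<close>]
    by (metis has_sum_infsum)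
qed

lemma le_Sup_of_summable:
  fixes a :: "nat \<Rightarrow> real"
  assumes "\<forall>m\<ge>1. a m \<ge> 0" and "summable (\<lambda>m. a (Suc m))"
  shows "\<forall>m\<ge>1. a m \<le> Sup (a ` {1..})"
proof -
  have le_suminf: "a m \<le> (\<Sum>m. a (Suc m))" if m: "m \<ge> 1" for m
  proof -
    obtain k where k: "m = Suc k" using m by (cases m) auto
    have "(\<Sum>m\<in>{k}. a (Suc m)) \<le> (\<Sum>m. a (Suc m))"
      using assms by (intro sum_le_suminf) auto
    then show ?thesis by (simp add: k)
  qed
  then have "bdd_above (a ` {1..})"
    by (auto simp: bdd_above_def)
  then show ?thesis
    by (auto intro!: cSup_upper)
qed

lemma theta_vec_term_abs_summable:
  fixes a :: "nat \<Rightarrow> real" and t :: "nat \<Rightarrow> complex" and T M :: real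
  assumes a_nonneg: "\<forall>m\<ge>1. a m \<ge> 0" and a_summable: "summable (\<lambda>m. a (Suc m))"
    and t_bound: "\<forall>m\<ge>1. norm (t m) \<le> T" and a_bound: "\<forall>m\<ge>1. a m \<le> M"
  shows "(\<lambda>l. norm (theta_vec_term a t l)) summable_on Mset k"
proof -
  have T: "T \<ge> 0" using t_bound[rule_format, of 1] norm_ge_zero[of "t 1"] by linarith
  have M: "M \<ge> 0" using a_nonneg[rule_format, of 1] a_bound[rule_format, of 1] by linarith
  define K where "K = M * (1 + T)"
  have K: "K \<ge> 0" using T M by (simp add: K_def)
  define w :: real where "w = 1 / (2 * (1 + K))"
  have w: "w > 0" using K by (simp add: w_def)
  have "w * K < 1"
    using K by (simp add: w_def pos_divide_less_eq)
  with w have "norm (complex_of_real w) * M * (1 + T) < 1"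
    by (simp add: K_def mult.assoc)
  then have "(\<lambda>l. norm (theta_monomial a t (of_real w) l)) summable_on partition_lists"
    by (rule theta_monomial_has_sum(1)[OF a_nonneg a_summable t_bound a_bound])
  then have "(\<lambda>l. norm (theta_monomial a t (of_real w) l)) summable_on Mset k"
    by (rule summable_on_subset_banach) (auto simp: Mset_eq_partition_lists)
  then have "(\<lambda>l. norm (theta_monomial a t (of_real w) l) * inverse (w ^ k)) summable_on Mset k"
    by (rule summable_on_cmult_left)
  moreover have "norm (theta_monomial a t (of_real w) l) * inverse (w ^ k) = norm (theta_vec_term a t l)"
    if "l \<in> Mset k" for l
    using that w by (simp add: theta_monomial_def Mset_def norm_mult norm_power)
  ultimately show ?thesis
    by (rule summable_on_cong[THEN iffD1, rotated]) simp
qed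

lemma theta_vec_series_has_sum:
  fixes a :: "nat \<Rightarrow> real" and t :: "nat \<Rightarrow> complex" and z :: complex and T M :: real
  assumes a_nonneg: "\<forall>m\<ge>1. a m \<ge> 0" and a_summable: "summable (\<lambda>m. a (Suc m))"
    and t_bound: "\<forall>m\<ge>1. norm (t m) \<le> T" and a_bound: "\<forall>m\<ge>1. a m \<le> M"
    and small: "norm z * M * (1 + T) < 1"
  shows "((\<lambda>k. theta_vec a t k * z ^ k) has_sum exp (\<Sum>j. z ^ Suc j / of_nat (Suc j) *
           (\<Sum>m. of_real (a (Suc m)) ^ Suc j * (t (Suc m) ^ Suc j - (t (Suc m) - 1) ^ Suc j)))) UNIV"
proof (rule has_sum_Sigma'[where f = "\<lambda>(k, l). theta_monomial a t z l"])
  have "bij_betw (\<lambda>l. (length l, l)) partition_lists (Sigma UNIV Mset)"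
    by (rule bij_betwI[where g = snd]) (auto simp: Mset_eq_partition_lists)
  note reindex = has_sum_reindex_bij_betw[OF this, symmetric]
  show "((\<lambda>(k, l). theta_monomial a t z l) has_sum exp (\<Sum>j. z ^ Suc j / of_nat (Suc j) *
      (\<Sum>m. of_real (a (Suc m)) ^ Suc j * (t (Suc m) ^ Suc j - (t (Suc m) - 1) ^ Suc j))))
      (Sigma UNIV Mset)"
    unfolding reindex using theta_monomial_has_sum(2)[OF assms] by simp
next
  fix k
  have "theta_vec_term a t summable_on Mset k"
    using theta_vec_term_abs_summable[OF a_nonneg a_summable t_bound a_bound]
    by (rule abs_summable_summable)
  then have "((\<lambda>l. theta_vec_term a t l * z ^ k) has_sum theta_vec a t k * z ^ k) (Mset k)"
    unfolding theta_vec_def by (intro has_sum_cmult_left has_sum_infsum)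
  then show "((\<lambda>l. (\<lambda>(k, l). theta_monomial a t z l) (k, l)) has_sum theta_vec a t k * z ^ k) (Mset k)"
    by (rule has_sum_cong[THEN iffD1, rotated]) (simp add: theta_monomial_def Mset_def)
qed

lemma suminf_of_real_power_mult:
  fixes a :: "nat \<Rightarrow> real" and w :: complex and M :: real
  assumes a_nonneg: "\<forall>m\<ge>1. a m \<ge> 0" and a_summable: "summable (\<lambda>m. a (Suc m))"
    and a_bound: "\<forall>m\<ge>1. a m \<le> M"
  shows "(\<Sum>m. of_real (a (Suc m)) ^ Suc j * w) = of_real (\<Sum>m. a (Suc m) ^ Suc j) * w"
proof -
  have "norm (a (Suc m) ^ Suc j) \<le> a (Suc m) * M ^ j" for m
  proof -
    have "a (Suc m) ^ j \<le> M ^ j"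
      using a_nonneg a_bound by (intro power_mono) auto
    then show ?thesis
      using a_nonneg by (simp add: mult_left_mono)
  qed
  then have summable: "summable (\<lambda>m. a (Suc m) ^ Suc j)"
    by (rule summable_comparison_test'[OF summable_mult2[OF a_summable]])
  then have "summable (\<lambda>m. complex_of_real (a (Suc m) ^ Suc j))"
    by (subst summable_complex_of_real)
  then have "(\<Sum>m. complex_of_real (a (Suc m) ^ Suc j) * w) = (\<Sum>m. complex_of_real (a (Suc m) ^ Suc j)) * w"
    by (rule suminf_mult2[symmetric])
  also have "\<dots> = of_real (\<Sum>m. a (Suc m) ^ Suc j) * w"
    by (simp only: suminf_of_real[OF summable])
  finally show ?thesis
    by (simp only: of_real_power)
qed

lemma theta_vec_generating_function:
  fixes a :: "nat \<Rightarrow> real" and t :: "nat \<Rightarrow> complex" and z :: complex and T M :: real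
  assumes a_nonneg: "\<forall>m\<ge>1. a m \<ge> 0" and a_summable: "summable (\<lambda>m. a (Suc m))"
    and t_bound: "\<forall>m\<ge>1. norm (t m) \<le> T" and a_bound: "\<forall>m\<ge>1. a m \<le> M"
    and small: "norm z * M * (1 + T) < 1"
  shows "summable (\<lambda>k. norm (theta_vec a t k * z ^ k))
        \<and> ((\<lambda>m. 1 + of_real (a (Suc m)) * z / (1 - of_real (a (Suc m)) * z * t (Suc m)))
             has_prod (\<Sum>k. theta_vec a t k * z ^ k))
        \<and> summable (\<lambda>j. z ^ Suc j / of_nat (Suc j) *
             (\<Sum>m. of_real (a (Suc m)) ^ Suc j * (t (Suc m) ^ Suc j - (t (Suc m) - 1) ^ Suc j)))
        \<and> (\<Sum>k. theta_vec a t k * z ^ k) =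
           exp (\<Sum>j. z ^ Suc j / of_nat (Suc j) *
             (\<Sum>m. of_real (a (Suc m)) ^ Suc j * (t (Suc m) ^ Suc j - (t (Suc m) - 1) ^ Suc j)))"
proof (intro conjI)
  note series = theta_vec_series_has_sum[OF assms]
  show sum_eq: "(\<Sum>k. theta_vec a t k * z ^ k) =
      exp (\<Sum>j. z ^ Suc j / of_nat (Suc j) *
        (\<Sum>m. of_real (a (Suc m)) ^ Suc j * (t (Suc m) ^ Suc j - (t (Suc m) - 1) ^ Suc j)))"
    using has_sum_imp_sums[OF series] by (rule sums_unique[symmetric])
  have "(\<lambda>k. theta_vec a t k * z ^ k) summable_on UNIV"
    using series by (rule has_sum_imp_summable)
  then show "summable (\<lambda>k. norm (theta_vec a t k * z ^ k))"
    by (intro summable_on_imp_summable) (simp add: summable_on_iff_abs_summable_on_complex)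
  show "(\<lambda>m. 1 + of_real (a (Suc m)) * z / (1 - of_real (a (Suc m)) * z * t (Suc m)))
      has_prod (\<Sum>k. theta_vec a t k * z ^ k)"
    unfolding sum_eq by (intro has_prod_of_tendsto_exp prod_factor_tendsto_exp(2)[OF assms])
  show "summable (\<lambda>j. z ^ Suc j / of_nat (Suc j) *
      (\<Sum>m. of_real (a (Suc m)) ^ Suc j * (t (Suc m) ^ Suc j - (t (Suc m) - 1) ^ Suc j)))"
    by (rule prod_factor_tendsto_exp(1)[OF assms])
qed

theorem mainTheorem10:
  fixes a :: "nat \<Rightarrow> real" and t :: "nat \<Rightarrow> complex" and T :: real
  assumes apos: "\<forall>m\<ge>1. a m > 0"
    and asum: "summable (\<lambda>m. a (Suc m))"
    and tbd: "\<forall>m\<ge>1. norm (t m) \<le> T"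
  shows "(\<forall>k. (\<lambda>l. norm (theta_vec_term a t l)) summable_on Mset k)
    \<and> (\<forall>z::complex. norm z * Sup (a ` {1..}) * (1 + T) < 1 \<longrightarrow>
          summable (\<lambda>k. norm (theta_vec a t k * z ^ k))
        \<and> ((\<lambda>m. 1 + of_real (a (Suc m)) * z / (1 - of_real (a (Suc m)) * z * t (Suc m)))
             has_prod (\<Sum>k. theta_vec a t k * z ^ k))
        \<and> summable (\<lambda>j. z ^ Suc j / of_nat (Suc j) *
             (\<Sum>m. of_real (a (Suc m)) ^ Suc j * (t (Suc m) ^ Suc j - (t (Suc m) - 1) ^ Suc j)))
        \<and> (\<Sum>k. theta_vec a t k * z ^ k) =
           exp (\<Sum>j. z ^ Suc j / of_nat (Suc j) *
             (\<Sum>m. of_real (a (Suc m)) ^ Suc j * (t (Suc m) ^ Suc j - (t (Suc m) - 1) ^ Suc j))))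
    \<and> (\<forall>s::complex. \<forall>k. (\<lambda>l. norm (theta_sc_term a s l)) summable_on Mset k)
    \<and> (\<forall>s::complex. \<forall>z::complex. norm z * Sup (a ` {1..}) * (1 + norm s) < 1 \<longrightarrow>
          summable (\<lambda>k. norm (theta_sc a s k * z ^ k))
        \<and> ((\<lambda>m. 1 + of_real (a (Suc m)) * z / (1 - of_real (a (Suc m)) * z * s))
             has_prod (\<Sum>k. theta_sc a s k * z ^ k))
        \<and> summable (\<lambda>j. z ^ Suc j / of_nat (Suc j) *
             of_real (\<Sum>m. a (Suc m) ^ Suc j) * (s ^ Suc j - (s - 1) ^ Suc j))
        \<and> (\<Sum>k. theta_sc a s k * z ^ k) =
           exp (\<Sum>j. z ^ Suc j / of_nat (Suc j) *
             of_real (\<Sum>m. a (Suc m) ^ Suc j) * (s ^ Suc j - (s - 1) ^ Suc j)))"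
proof -
  have a_nonneg: "\<forall>m\<ge>1. a m \<ge> 0"
    using apos by (simp add: less_imp_le)
  note a_bound = le_Sup_of_summable[OF a_nonneg asum]
  have constant_bound: "\<forall>m\<ge>1. norm ((\<lambda>_. s) m) \<le> norm s" for s :: complex
    by simp
  have scalar_exponent:
    "z ^ Suc j / of_nat (Suc j) * of_real (\<Sum>m. a (Suc m) ^ Suc j) * (s ^ Suc j - (s - 1) ^ Suc j) =
     z ^ Suc j / of_nat (Suc j) * (\<Sum>m. of_real (a (Suc m)) ^ Suc j * (s ^ Suc j - (s - 1) ^ Suc j))"
    for z s :: complex and j
    by (simp only: suminf_of_real_power_mult[OF a_nonneg asum a_bound] mult.assoc)
  show ?thesis
    unfolding theta_sc_eq_theta_vec theta_sc_term_eq_theta_vec_term scalar_exponent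
    by (intro theta_vec_term_abs_summable[OF a_nonneg asum tbd a_bound]
        theta_vec_generating_function[OF a_nonneg asum tbd a_bound]
        theta_vec_term_abs_summable[OF a_nonneg asum constant_bound a_bound]
        theta_vec_generating_function[OF a_nonneg asum constant_bound a_bound]
        conjI allI impI; assumption)
qed

end
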